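(* Let $M_0>0$, $r\in(0,+\infty]$, $\varphi,\tilde\varphi\in\mathrm{Lip}_\alpha$ and $\tau_0,\tilde\tau_0\in C_+(\Omega)$ with $\|\varphi\|_{\mathrm{Lip}_\alpha}+\|\tau_0\|_\infty\le M_0$ and $\|\tilde\varphi\|_{\mathrm{Lip}_\alpha}+\|\tilde\tau_0\|_\infty\le M_0$. Let $A,\tilde A\in C((-\infty,r),C(\Omega))$ with $A=\varphi$, $\tilde A=\tilde\varphi$ on $(-\infty,0]\times\Omega$, and assume $M:=\max\{\sup_{t\in[0,r)}\|A(t,\cdot)\|_\infty,\sup_{t\in[0,r)}\|\tilde A(t,\cdot)\|_\infty\}<+\infty$. Let $\delta_0(x)=\int_{-\tau_0(x)}^0f(\varphi(s,\cdot))(x)ds$, $\tilde\delta_0(x)=\int_{-\tilde\tau_0(x)}^0f(\tilde\varphi(s,\cdot))(x)ds$, and $\bar\tau_0^\infty:=\max\{\sup_x\tau_0(x),\sup_x\tilde\tau_0(x)\}$. Then there exists a constant $L_\tau>0$ (depending only on $M_0$, $M$, $\alpha$ and $f$) such that for all $t\in[0,r)$ and $x\in\Omega$, $$|\widehat\tau(A_t,\delta_0)(x)-\widehat\tau(\tilde A_t,\tilde\delta_0)(x)|\le L_\tau\Big[\sup_{s\in[-\bar\tau_0^\infty,r)}\|A(s,\cdot)-\tilde A(s,\cdot)\|_\infty+\|\delta_0-\tilde\delta_0\|_\infty\Big].$$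
   Context: $\Omega\subset\mathbb R^n$ compact, $C(\Omega)$ with sup norm, $\alpha\ge0$ fixed. $f:C(\Omega)\to C(\Omega)$ is Lipschitz, $0<f(\phi)(x)\le M_f$ for a constant $M_f$, non-increasing for the pointwise order. $\mathrm{Lip}_\alpha$ is the space of $\phi\in C((-\infty,0],C(\Omega))$ such that $\phi_\alpha(t):=e^{-\alpha|t|}\phi(t,\cdot)$ is bounded and Lipschitz, with norm $\sup_{t\le0}\|\phi_\alpha(t)\|_\infty+\sup_{t\ne s}\|\phi_\alpha(t)-\phi_\alpha(s)\|_\infty/|t-s|$. $A_t(\theta):=A(t+\theta)$ for $\theta\le 0$. For $t\in[0,r)$, $\widehat\tau(A_t,\delta_0)(x)$ denotes the unique nonnegative number $\sigma$ with $\int_{-\sigma}^0f(A_t(s,\cdot))(x)ds=\delta_0(x)$, equivalently $\int_{t-\sigma}^tf(A(s,\cdot))(x)ds=\int_{-\tau_0(x)}^0f(\varphi(s,\cdot))(x)ds$ (and similarly for $\tilde A,\tilde\delta_0$). *)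

theory Defs
  imports "HOL-Analysis.Analysis" "HOL-Library.Extended_Real"
begin

text \<open>Elements of C(Omega) are represented as functions on the ambient space;
only their values on Omega matter.\<close>

definition supnorm :: "'a set \<Rightarrow> ('a \<Rightarrow> real) \<Rightarrow> real" where
  "supnorm \<Omega> g = (SUP x\<in>\<Omega>. \<bar>g x\<bar>)"

definition cont_C :: "'a::topological_space set \<Rightarrow> real set \<Rightarrow> (real \<Rightarrow> 'a \<Rightarrow> real) \<Rightarrow> bool" where
  "cont_C \<Omega> T A \<longleftrightarrow>
     (\<forall>t\<in>T. continuous_on \<Omega> (A t)) \<and>
     (\<forall>t\<in>T. \<forall>\<epsilon>>0. \<exists>\<delta>>0. \<forall>s\<in>T. \<bar>s - t\<bar> < \<delta> \<longrightarrow>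
        supnorm \<Omega> (\<lambda>x. A s x - A t x) < \<epsilon>)"

definition weighted :: "real \<Rightarrow> (real \<Rightarrow> 'a \<Rightarrow> real) \<Rightarrow> real \<Rightarrow> 'a \<Rightarrow> real" where
  "weighted \<alpha> \<phi> t = (\<lambda>x. exp (- \<alpha> * \<bar>t\<bar>) * \<phi> t x)"

definition in_Lip_alpha :: "'a::topological_space set \<Rightarrow> real \<Rightarrow> (real \<Rightarrow> 'a \<Rightarrow> real) \<Rightarrow> bool" where
  "in_Lip_alpha \<Omega> \<alpha> \<phi> \<longleftrightarrow>
     cont_C \<Omega> {..0} \<phi> \<and>
     bdd_above ((\<lambda>t. supnorm \<Omega> (weighted \<alpha> \<phi> t)) ` {..0}) \<and>
     (\<exists>K. \<forall>t\<le>0. \<forall>s\<le>0.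
        supnorm \<Omega> (\<lambda>x. weighted \<alpha> \<phi> t x - weighted \<alpha> \<phi> s x) \<le> K * \<bar>t - s\<bar>)"

definition Lip_alpha_norm :: "'a set \<Rightarrow> real \<Rightarrow> (real \<Rightarrow> 'a \<Rightarrow> real) \<Rightarrow> real" where
  "Lip_alpha_norm \<Omega> \<alpha> \<phi> =
     (SUP t\<in>{..0}. supnorm \<Omega> (weighted \<alpha> \<phi> t)) +
     (SUP p\<in>{(t, s). t \<le> 0 \<and> s \<le> 0 \<and> t \<noteq> s}.
        supnorm \<Omega> (\<lambda>x. weighted \<alpha> \<phi> (fst p) x - weighted \<alpha> \<phi> (snd p) x)
          / \<bar>fst p - snd p\<bar>)"

definition seg :: "(real \<Rightarrow> 'a \<Rightarrow> real) \<Rightarrow> real \<Rightarrow> real \<Rightarrow> 'a \<Rightarrow> real" where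
  "seg A t = (\<lambda>\<theta>. A (t + \<theta>))"

definition hat_tau :: "(('a \<Rightarrow> real) \<Rightarrow> ('a \<Rightarrow> real)) \<Rightarrow> (real \<Rightarrow> 'a \<Rightarrow> real)
                        \<Rightarrow> ('a \<Rightarrow> real) \<Rightarrow> 'a \<Rightarrow> real" where
  "hat_tau f \<Psi> \<delta> x = (THE \<sigma>. 0 \<le> \<sigma> \<and> integral {-\<sigma>..0} (\<lambda>s. f (\<Psi> s) x) = \<delta> x)"

definition admissible_f :: "'a::topological_space set \<Rightarrow> (('a \<Rightarrow> real) \<Rightarrow> ('a \<Rightarrow> real)) \<Rightarrow> bool" where
  "admissible_f \<Omega> f \<longleftrightarrow>
     (\<forall>\<phi>. continuous_on \<Omega> \<phi> \<longrightarrow> continuous_on \<Omega> (f \<phi>)) \<and>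
     (\<exists>K. \<forall>\<phi> \<psi>. continuous_on \<Omega> \<phi> \<longrightarrow> continuous_on \<Omega> \<psi> \<longrightarrow>
        supnorm \<Omega> (\<lambda>x. f \<phi> x - f \<psi> x) \<le> K * supnorm \<Omega> (\<lambda>x. \<phi> x - \<psi> x)) \<and>
     (\<exists>Mf. \<forall>\<phi>. continuous_on \<Omega> \<phi> \<longrightarrow> (\<forall>x\<in>\<Omega>. 0 < f \<phi> x \<and> f \<phi> x \<le> Mf)) \<and>
     (\<forall>\<phi> \<psi>. continuous_on \<Omega> \<phi> \<longrightarrow> continuous_on \<Omega> \<psi> \<longrightarrow>
        (\<forall>x\<in>\<Omega>. \<phi> x \<le> \<psi> x) \<longrightarrow> (\<forall>x\<in>\<Omega>. f \<psi> x \<le> f \<phi> x))"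

end

theory Submission
  imports Defs
begin

text \<open>Let \<open>\<sigma>\<close>, \<open>\<sigma>'\<close> be the two delays at \<open>(t, x)\<close>, i.e. the integrals of \<open>f (A s) x\<close> over
  \<open>[t - \<sigma>, t]\<close> and of \<open>f (A' s) x\<close> over \<open>[t - \<sigma>', t]\<close> equal \<open>\<delta>0 x\<close> and \<open>\<delta>0' x\<close>. On
  \<open>[-M0, r)\<close> both histories are bounded by \<open>C = max M (exp (\<alpha> M0) M0)\<close>, so antitonicity
  and compactness give \<open>m > 0\<close> with \<open>m \<le> f (A s) x, f (A' s) x\<close>; hence \<open>\<sigma>, \<sigma>' \<le> Mf M0 / m\<close>.
  If \<open>\<sigma>' \<le> \<sigma>\<close>, subtracting the two integral equations leaves the integral of \<open>f (A s) x\<close>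
  over \<open>[t - \<sigma>, t - \<sigma>']\<close>, which is at least \<open>m (\<sigma> - \<sigma>')\<close> and at most
  \<open>|\<delta>0 x - \<delta>0' x| + K D \<sigma>'\<close>, where \<open>K\<close> is the Lipschitz constant of \<open>f\<close> and \<open>D\<close> the
  sup-distance of the two histories on \<open>[-taubar, r)\<close>.\<close>

lemma integral_ge_const_mult:
  fixes g :: "real \<Rightarrow> real"
  assumes "g integrable_on {a..b}" "a \<le> b" "\<And>u. u \<in> {a..b} \<Longrightarrow> m \<le> g u"
  shows "m * (b - a) \<le> integral {a..b} g"
proof -
  have "integral {a..b} (\<lambda>_. m) \<le> integral {a..b} g"
    using assms by (intro integral_le) auto
  with assms(2) show ?thesis by (simp add: mult.commute)
qed

lemma integral_pos_continuous:
  fixes g :: "real \<Rightarrow> real"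
  assumes "continuous_on {a..b} g" "a < b" "\<And>u. u \<in> {a..b} \<Longrightarrow> 0 < g u"
  shows "0 < integral {a..b} g"
proof -
  obtain u where u: "u \<in> {a..b}" "\<And>v. v \<in> {a..b} \<Longrightarrow> g u \<le> g v"
    using continuous_attains_inf[of "{a..b}" g] assms by fastforce
  have "g u * (b - a) \<le> integral {a..b} g"
    using assms u by (intro integral_ge_const_mult integrable_continuous_real) auto
  moreover have "0 < g u * (b - a)" using assms u by auto
  ultimately show ?thesis by linarith
qed

lemma backward_integral_inj:
  fixes g :: "real \<Rightarrow> real"
  assumes g: "continuous_on {..t} g" "\<And>u. u \<le> t \<Longrightarrow> 0 < g u"
    and "0 \<le> s1" "0 \<le> s2" "integral {t-s1..t} g = integral {t-s2..t} g"
  shows "s1 = s2"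
proof -
  have less: "integral {t-s1..t} g < integral {t-s2..t} g" if "0 \<le> s1" "s1 < s2" for s1 s2
  proof -
    have c: "continuous_on {t-s2..t} g" using g(1) by (rule continuous_on_subset) auto
    have "integral {t-s2..t-s1} g + integral {t-s1..t} g = integral {t-s2..t} g"
      using that c by (intro Henstock_Kurzweil_Integration.integral_combine integrable_continuous_real) auto
    moreover have "0 < integral {t-s2..t-s1} g"
      using that g(2) by (intro integral_pos_continuous continuous_on_subset[OF c]) auto
    ultimately show ?thesis by linarith
  qed
  show ?thesis using less[of s1 s2] less[of s2 s1] assms by (metis linorder_neqE_linordered_idom less_irrefl)
qed

lemma backward_time_exists:
  fixes g :: "real \<Rightarrow> real"
  assumes g: "continuous_on {..t} g" "\<And>u. u \<le> t \<Longrightarrow> 0 < g u"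
    and "a \<le> t" "0 \<le> d" "d \<le> integral {a..t} g"
  obtains \<sigma> where "(THE \<sigma>. 0 \<le> \<sigma> \<and> integral {t-\<sigma>..t} g = d) = \<sigma>"
    "0 \<le> \<sigma>" "\<sigma> \<le> t - a" "integral {t-\<sigma>..t} g = d"
proof -
  have "continuous_on {a..t} (\<lambda>v. integral {v..t} g)"
    using g(1) by (intro indefinite_integral_continuous_1' integrable_continuous_real)
      (auto intro: continuous_on_subset)
  then obtain v where v: "a \<le> v" "v \<le> t" "integral {v..t} g = d"
    using IVT2'[of "\<lambda>v. integral {v..t} g" t d a] assms by auto
  have "(THE \<sigma>. 0 \<le> \<sigma> \<and> integral {t-\<sigma>..t} g = d) = t - v"
    using v backward_integral_inj[OF g] by (intro the_equality) auto
  with v that show ?thesis by simp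
qed

lemma backward_time_le:
  fixes g :: "real \<Rightarrow> real"
  assumes "continuous_on {t-\<sigma>..t} g" "0 \<le> \<sigma>" "\<And>u. u \<in> {t-\<sigma>..t} \<Longrightarrow> m \<le> g u"
  shows "m * \<sigma> \<le> integral {t-\<sigma>..t} g"
  using integral_ge_const_mult[of g "t-\<sigma>" t m] assms integrable_continuous_real by auto

lemma backward_time_diff_ordered:
  fixes g g' :: "real \<Rightarrow> real"
  assumes "0 \<le> \<sigma>'" "\<sigma>' \<le> \<sigma>"
    and c: "continuous_on {t-\<sigma>..t} g" and c': "continuous_on {t-\<sigma>'..t} g'"
    and d: "integral {t-\<sigma>..t} g = d" and d': "integral {t-\<sigma>'..t} g' = d'"
    and m: "\<And>u. u \<in> {t-\<sigma>..t} \<Longrightarrow> m \<le> g u"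
    and E: "\<And>u. u \<in> {t-\<sigma>'..t} \<Longrightarrow> \<bar>g u - g' u\<bar> \<le> E"
  shows "m * (\<sigma> - \<sigma>') \<le> (d - d') + E * \<sigma>'"
proof -
  have i': "g' integrable_on {t-\<sigma>'..t}" using c' integrable_continuous_real by blast
  have split: "integral {t-\<sigma>..t-\<sigma>'} g + integral {t-\<sigma>'..t} g = d"
    unfolding d[symmetric] using assms
    by (intro Henstock_Kurzweil_Integration.integral_combine integrable_continuous_real) auto
  have "g integrable_on {t-\<sigma>..t-\<sigma>'}"
    using assms by (intro integrable_continuous_real continuous_on_subset[OF c]) auto
  then have "m * \<sigma> - m * \<sigma>' \<le> integral {t-\<sigma>..t-\<sigma>'} g"
    using integral_ge_const_mult[of g "t-\<sigma>" "t-\<sigma>'" m] assms by (simp add: algebra_simps)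
  moreover have "d' - E * \<sigma>' \<le> integral {t-\<sigma>'..t} g"
  proof -
    have "g' u - E \<le> g u" if "u \<in> {t-\<sigma>'..t}" for u
      using E[OF that] by linarith
    then have "integral {t-\<sigma>'..t} (\<lambda>u. g' u - E) \<le> integral {t-\<sigma>'..t} g"
      using i' assms by (intro integral_le integrable_diff integrable_continuous_real
          continuous_on_subset[OF c]) auto
    moreover have "integral {t-\<sigma>'..t} (\<lambda>u. g' u - E)
        = integral {t-\<sigma>'..t} g' - integral {t-\<sigma>'..t} (\<lambda>u. E)"
      using i' by (intro integral_diff) auto
    ultimately have "integral {t-\<sigma>'..t} g' - integral {t-\<sigma>'..t} (\<lambda>u. E) \<le> integral {t-\<sigma>'..t} g"
      by simp
    then show ?thesis using d' assms(1) by (simp add: mult.commute)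
  qed
  ultimately show ?thesis using split by (simp add: algebra_simps)
qed

lemma backward_time_diff:
  fixes g g' :: "real \<Rightarrow> real"
  assumes "0 \<le> \<sigma>" "0 \<le> \<sigma>'"
    and "continuous_on {t-\<sigma>..t} g" "continuous_on {t-\<sigma>'..t} g'"
    and "integral {t-\<sigma>..t} g = d" "integral {t-\<sigma>'..t} g' = d'"
    and "\<And>u. u \<in> {t-\<sigma>..t} \<Longrightarrow> m \<le> g u" "\<And>u. u \<in> {t-\<sigma>'..t} \<Longrightarrow> m \<le> g' u"
    and E: "\<And>u. u \<in> {t - min \<sigma> \<sigma>'..t} \<Longrightarrow> \<bar>g u - g' u\<bar> \<le> E"
  shows "m * \<bar>\<sigma> - \<sigma>'\<bar> \<le> \<bar>d - d'\<bar> + E * min \<sigma> \<sigma>'"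
proof (cases "\<sigma>' \<le> \<sigma>")
  case True
  have eqs: "m * \<bar>\<sigma> - \<sigma>'\<bar> = m * (\<sigma> - \<sigma>')" "min \<sigma> \<sigma>' = \<sigma>'" using True by auto
  have "m * (\<sigma> - \<sigma>') \<le> (d - d') + E * \<sigma>'"
    using True assms by (intro backward_time_diff_ordered[of \<sigma>' \<sigma> t g g']) (auto simp: min_def)
  then show ?thesis unfolding eqs using abs_ge_self[of "d - d'"] by linarith
next
  case False
  have eqs: "m * \<bar>\<sigma> - \<sigma>'\<bar> = m * (\<sigma>' - \<sigma>)" "min \<sigma> \<sigma>' = \<sigma>" using False by auto
  have "m * (\<sigma>' - \<sigma>) \<le> (d' - d) + E * \<sigma>"
    using False assms by (intro backward_time_diff_ordered[of \<sigma> \<sigma>' t g' g])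
      (auto simp: min_def abs_minus_commute)
  then show ?thesis unfolding eqs using abs_ge_self[of "d' - d"] abs_minus_commute[of d d'] by linarith
qed

lemma abs_le_supnorm_of_bounded:
  assumes "\<And>y. y \<in> \<Omega> \<Longrightarrow> \<bar>g y\<bar> \<le> B" "x \<in> \<Omega>"
  shows "\<bar>g x\<bar> \<le> supnorm \<Omega> g"
  unfolding supnorm_def using assms by (intro cSUP_upper bdd_aboveI2) auto

lemma abs_le_supnorm:
  fixes g :: "'a::topological_space \<Rightarrow> real"
  assumes "compact \<Omega>" "continuous_on \<Omega> g" "x \<in> \<Omega>"
  shows "\<bar>g x\<bar> \<le> supnorm \<Omega> g"
proof -
  have "compact ((\<lambda>y. \<bar>g y\<bar>) ` \<Omega>)"
    using assms by (intro compact_continuous_image continuous_intros)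
  then obtain B where B: "\<And>y. y \<in> \<Omega> \<Longrightarrow> \<bar>g y\<bar> \<le> B"
    using compact_imp_bounded bounded_imp_bdd_above by (metis bdd_above.E imageI)
  show ?thesis by (rule abs_le_supnorm_of_bounded[OF B assms(3)])
qed

lemma supnorm_le:
  assumes "\<Omega> \<noteq> {}" "\<And>x. x \<in> \<Omega> \<Longrightarrow> \<bar>g x\<bar> \<le> B"
  shows "supnorm \<Omega> g \<le> B"
  unfolding supnorm_def using assms by (intro cSUP_least) auto

lemma supnorm_le_SUP_supnorm:
  assumes "\<Omega> \<noteq> {}" "\<And>s y. s \<in> I \<Longrightarrow> y \<in> \<Omega> \<Longrightarrow> \<bar>g s y\<bar> \<le> B" "s \<in> I"
  shows "supnorm \<Omega> (g s) \<le> (SUP s\<in>I. supnorm \<Omega> (g s))"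
  using assms by (intro cSUP_upper bdd_aboveI2 supnorm_le) auto

lemma Lip_alpha_norm_ge_supnorm_weighted:
  fixes \<phi> :: "real \<Rightarrow> 'a::topological_space \<Rightarrow> real"
  assumes "compact \<Omega>" "x \<in> \<Omega>" "in_Lip_alpha \<Omega> \<alpha> \<phi>" "s \<le> 0"
  shows "supnorm \<Omega> (weighted \<alpha> \<phi> s) \<le> Lip_alpha_norm \<Omega> \<alpha> \<phi>"
proof -
  define Q where "Q = (\<lambda>p. supnorm \<Omega> (\<lambda>x. weighted \<alpha> \<phi> (fst p) x - weighted \<alpha> \<phi> (snd p) x)
    / \<bar>fst p - snd p\<bar>)"
  define P where "P = {(t, s). t \<le> (0::real) \<and> s \<le> 0 \<and> t \<noteq> s}"
  have cont: "continuous_on \<Omega> (weighted \<alpha> \<phi> s)" if "s \<le> 0" for s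
    using assms(3) that unfolding in_Lip_alpha_def cont_C_def weighted_def
    by (auto intro!: continuous_intros)
  obtain K where K: "\<And>t s. t \<le> 0 \<Longrightarrow> s \<le> 0 \<Longrightarrow>
      supnorm \<Omega> (\<lambda>x. weighted \<alpha> \<phi> t x - weighted \<alpha> \<phi> s x) \<le> K * \<bar>t - s\<bar>"
    using assms(3) unfolding in_Lip_alpha_def by blast
  have "bdd_above (Q ` P)"
    using K by (intro bdd_aboveI2[of _ _ K]) (auto simp: Q_def P_def pos_divide_le_eq)
  moreover have "0 \<le> supnorm \<Omega> (\<lambda>x. weighted \<alpha> \<phi> 0 x - weighted \<alpha> \<phi> (-1) x)"
  proof -
    have "continuous_on \<Omega> (\<lambda>x. weighted \<alpha> \<phi> 0 x - weighted \<alpha> \<phi> (-1) x)"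
      using cont by (intro continuous_on_diff) auto
    from abs_le_supnorm[OF assms(1) this assms(2)] show ?thesis by (metis abs_ge_zero order_trans)
  qed
  then have "0 \<le> Q (0, -1)" by (simp add: Q_def)
  ultimately have "0 \<le> (SUP p\<in>P. Q p)"
    by (intro cSUP_upper2[of _ _ "(0, -1)"]) (auto simp: P_def)
  moreover have "supnorm \<Omega> (weighted \<alpha> \<phi> s) \<le> (SUP t\<in>{..0}. supnorm \<Omega> (weighted \<alpha> \<phi> t))"
    using assms unfolding in_Lip_alpha_def by (intro cSUP_upper) auto
  ultimately show ?thesis unfolding Lip_alpha_norm_def Q_def P_def by linarith
qed

lemma Lip_alpha_pointwise_bound:
  fixes \<phi> :: "real \<Rightarrow> 'a::topological_space \<Rightarrow> real"
  assumes "compact \<Omega>" "in_Lip_alpha \<Omega> \<alpha> \<phi>" "s \<le> 0" "y \<in> \<Omega>"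
  shows "\<bar>\<phi> s y\<bar> \<le> exp (\<alpha> * \<bar>s\<bar>) * Lip_alpha_norm \<Omega> \<alpha> \<phi>"
proof -
  have "continuous_on \<Omega> (weighted \<alpha> \<phi> s)"
    using assms unfolding in_Lip_alpha_def cont_C_def weighted_def by (auto intro!: continuous_intros)
  then have "exp (- \<alpha> * \<bar>s\<bar>) * \<bar>\<phi> s y\<bar> \<le> Lip_alpha_norm \<Omega> \<alpha> \<phi>"
    using abs_le_supnorm[OF assms(1) _ assms(4)] Lip_alpha_norm_ge_supnorm_weighted[OF assms(1,4,2,3)]
    unfolding weighted_def by (fastforce simp: abs_mult)
  then show ?thesis by (simp add: exp_minus field_simps)
qed

lemma ereal_less_if_le: "u \<le> t \<Longrightarrow> ereal t < r \<Longrightarrow> ereal u < r"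
  by (metis ereal_less_eq(3) order.strict_trans1)

definition extends_history :: "'a::topological_space set \<Rightarrow> ereal \<Rightarrow> (real \<Rightarrow> 'a \<Rightarrow> real)
    \<Rightarrow> (real \<Rightarrow> 'a \<Rightarrow> real) \<Rightarrow> bool" where
  "extends_history \<Omega> r \<phi> A \<longleftrightarrow>
     cont_C \<Omega> {t. ereal t < r} A \<and> cont_C \<Omega> {..0} \<phi> \<and> (\<forall>t\<le>0. \<forall>x\<in>\<Omega>. A t x = \<phi> t x)"

lemma extends_history_continuous_on:
  assumes "extends_history \<Omega> r \<phi> A" "ereal t < r"
  shows "continuous_on \<Omega> (A t)"
  using assms unfolding extends_history_def cont_C_def by auto

lemma in_Lip_alpha_extends_history:
  assumes "in_Lip_alpha \<Omega> \<alpha> \<phi>" "cont_C \<Omega> {t. ereal t < r} A" "\<forall>t\<le>0. \<forall>x\<in>\<Omega>. A t x = \<phi> t x"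
  shows "extends_history \<Omega> r \<phi> A"
  using assms unfolding extends_history_def in_Lip_alpha_def by blast

lemma history_bound:
  fixes A \<phi> :: "real \<Rightarrow> 'a::topological_space \<Rightarrow> real"
  assumes "compact \<Omega>" "0 \<le> \<alpha>" "0 \<le> M0"
    and A: "extends_history \<Omega> r \<phi> A"
    and \<phi>: "in_Lip_alpha \<Omega> \<alpha> \<phi>" "Lip_alpha_norm \<Omega> \<alpha> \<phi> \<le> M0"
    and bdd: "bdd_above ((\<lambda>t. supnorm \<Omega> (A t)) ` {t. 0 \<le> t \<and> ereal t < r})"
    and M: "(SUP t\<in>{t. 0 \<le> t \<and> ereal t < r}. supnorm \<Omega> (A t)) \<le> M"
    and u: "- M0 \<le> u" "ereal u < r" and y: "y \<in> \<Omega>"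
  shows "\<bar>A u y\<bar> \<le> max M (exp (\<alpha> * M0) * M0)"
proof (cases "0 \<le> u")
  case True
  have "\<bar>A u y\<bar> \<le> supnorm \<Omega> (A u)"
    using abs_le_supnorm[OF assms(1) extends_history_continuous_on[OF A u(2)] y] .
  also have "\<dots> \<le> (SUP t\<in>{t. 0 \<le> t \<and> ereal t < r}. supnorm \<Omega> (A t))"
    using True u by (intro cSUP_upper[OF _ bdd]) auto
  finally show ?thesis using M by linarith
next
  case False
  have "\<bar>A u y\<bar> = \<bar>\<phi> u y\<bar>" using A False y unfolding extends_history_def by auto
  also have "\<dots> \<le> exp (\<alpha> * \<bar>u\<bar>) * Lip_alpha_norm \<Omega> \<alpha> \<phi>"
    using False by (intro Lip_alpha_pointwise_bound[OF assms(1) \<phi>(1) _ y]) auto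
  also have "\<dots> \<le> exp (\<alpha> * \<bar>u\<bar>) * M0"
    using \<phi>(2) by (intro mult_left_mono) auto
  also have "\<dots> \<le> exp (\<alpha> * M0) * M0"
  proof -
    have "\<alpha> * \<bar>u\<bar> \<le> \<alpha> * M0" using False u assms(2) by (intro mult_left_mono) auto
    then show ?thesis using assms(3) by (intro mult_right_mono) auto
  qed
  finally show ?thesis by linarith
qed

lemma initial_data_bounds:
  fixes \<phi> A :: "real \<Rightarrow> 'a::topological_space \<Rightarrow> real"
  assumes "compact \<Omega>" "\<Omega> \<noteq> {}" "0 \<le> \<alpha>" "0 \<le> M0"
    and \<phi>: "in_Lip_alpha \<Omega> \<alpha> \<phi>" and \<tau>: "continuous_on \<Omega> \<tau>" "\<forall>x\<in>\<Omega>. 0 \<le> \<tau> x"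
    and norm: "Lip_alpha_norm \<Omega> \<alpha> \<phi> + supnorm \<Omega> \<tau> \<le> M0"
    and A: "extends_history \<Omega> r \<phi> A"
    and "bdd_above ((\<lambda>t. supnorm \<Omega> (A t)) ` {t. 0 \<le> t \<and> ereal t < r})"
    and "(SUP t\<in>{t. 0 \<le> t \<and> ereal t < r}. supnorm \<Omega> (A t)) \<le> M"
  shows "\<forall>y\<in>\<Omega>. \<tau> y \<le> M0"
    and "\<And>u y. - M0 \<le> u \<Longrightarrow> ereal u < r \<Longrightarrow> y \<in> \<Omega> \<Longrightarrow> \<bar>A u y\<bar> \<le> max M (exp (\<alpha> * M0) * M0)"
proof -
  obtain x where x: "x \<in> \<Omega>" using assms(2) by blast
  have "\<bar>\<phi> 0 x\<bar> \<le> Lip_alpha_norm \<Omega> \<alpha> \<phi>"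
    using Lip_alpha_pointwise_bound[OF assms(1) \<phi> _ x, of 0] by simp
  moreover have "\<tau> y \<le> supnorm \<Omega> \<tau>" if "y \<in> \<Omega>" for y
    using abs_le_supnorm[OF assms(1) \<tau>(1) that] by linarith
  moreover have "0 \<le> supnorm \<Omega> \<tau>"
    using abs_le_supnorm[OF assms(1) \<tau>(1) x] by linarith
  ultimately have N: "Lip_alpha_norm \<Omega> \<alpha> \<phi> \<le> M0" and "\<forall>y\<in>\<Omega>. \<tau> y \<le> M0"
    using norm by (smt (verit))+
  then show "\<forall>y\<in>\<Omega>. \<tau> y \<le> M0" by blast
  show "\<bar>A u y\<bar> \<le> max M (exp (\<alpha> * M0) * M0)" if "- M0 \<le> u" "ereal u < r" "y \<in> \<Omega>" for u y
    using history_bound[OF assms(1,3,4) A \<phi> N] assms(10,11) that by blast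
qed

locale admissible_response =
  fixes \<Omega> :: "'a::topological_space set"
    and f :: "('a \<Rightarrow> real) \<Rightarrow> ('a \<Rightarrow> real)"
    and K Mf :: real
  assumes compact_domain: "compact \<Omega>"
    and domain_nonempty: "\<Omega> \<noteq> {}"
    and continuous_on_response: "continuous_on \<Omega> \<phi> \<Longrightarrow> continuous_on \<Omega> (f \<phi>)"
    and response_lipschitz: "continuous_on \<Omega> \<phi> \<Longrightarrow> continuous_on \<Omega> \<psi> \<Longrightarrow>
      supnorm \<Omega> (\<lambda>x. f \<phi> x - f \<psi> x) \<le> K * supnorm \<Omega> (\<lambda>x. \<phi> x - \<psi> x)"
    and lipschitz_const_nonneg: "0 \<le> K"
    and response_pos: "continuous_on \<Omega> \<phi> \<Longrightarrow> y \<in> \<Omega> \<Longrightarrow> 0 < f \<phi> y"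
    and response_le: "continuous_on \<Omega> \<phi> \<Longrightarrow> y \<in> \<Omega> \<Longrightarrow> f \<phi> y \<le> Mf"
    and response_antimono: "continuous_on \<Omega> \<phi> \<Longrightarrow> continuous_on \<Omega> \<psi> \<Longrightarrow>
      (\<forall>x\<in>\<Omega>. \<phi> x \<le> \<psi> x) \<Longrightarrow> y \<in> \<Omega> \<Longrightarrow> f \<psi> y \<le> f \<phi> y"

lemma admissible_f_imp_admissible_response:
  assumes "compact \<Omega>" "\<Omega> \<noteq> {}" "admissible_f \<Omega> f"
  obtains K Mf where "admissible_response \<Omega> f K Mf"
proof -
  obtain K Mf where
    K: "\<And>\<phi> \<psi>. continuous_on \<Omega> \<phi> \<Longrightarrow> continuous_on \<Omega> \<psi> \<Longrightarrow>
      supnorm \<Omega> (\<lambda>x. f \<phi> x - f \<psi> x) \<le> K * supnorm \<Omega> (\<lambda>x. \<phi> x - \<psi> x)" and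
    Mf: "\<And>\<phi>. continuous_on \<Omega> \<phi> \<Longrightarrow> \<forall>x\<in>\<Omega>. 0 < f \<phi> x \<and> f \<phi> x \<le> Mf"
    using assms(3) unfolding admissible_f_def by blast
  have "supnorm \<Omega> (\<lambda>x. f \<phi> x - f \<psi> x) \<le> max K 0 * supnorm \<Omega> (\<lambda>x. \<phi> x - \<psi> x)"
    if "continuous_on \<Omega> \<phi>" "continuous_on \<Omega> \<psi>" for \<phi> \<psi>
  proof -
    obtain x where "x \<in> \<Omega>" using assms(2) by blast
    then have "0 \<le> supnorm \<Omega> (\<lambda>x. \<phi> x - \<psi> x)"
      using abs_le_supnorm[OF assms(1) continuous_on_diff[OF that]] by (metis abs_ge_zero order_trans)
    then show ?thesis using K[OF that] by (smt (verit) mult_right_mono)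
  qed
  then have "admissible_response \<Omega> f (max K 0) Mf"
    using assms Mf unfolding admissible_f_def admissible_response_def by auto
  then show ?thesis by (rule that)
qed

context admissible_response
begin

lemma response_bound_nonneg: "0 \<le> Mf"
proof -
  obtain y where "y \<in> \<Omega>" using domain_nonempty by blast
  then show ?thesis using response_pos[of "\<lambda>_. 0"] response_le[of "\<lambda>_. 0"] by fastforce
qed

lemma response_diff_le:
  assumes "continuous_on \<Omega> \<phi>" "continuous_on \<Omega> \<psi>" "y \<in> \<Omega>"
  shows "\<bar>f \<phi> y - f \<psi> y\<bar> \<le> K * supnorm \<Omega> (\<lambda>x. \<phi> x - \<psi> x)"
  using abs_le_supnorm[OF compact_domain continuous_on_diff[OF continuous_on_response
      continuous_on_response] assms(3)] response_lipschitz[OF assms(1,2)] assms(1,2)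
  by fastforce

lemma response_eq:
  assumes "continuous_on \<Omega> \<phi>" "continuous_on \<Omega> \<psi>" "\<forall>x\<in>\<Omega>. \<phi> x = \<psi> x" "y \<in> \<Omega>"
  shows "f \<phi> y = f \<psi> y"
proof -
  have "supnorm \<Omega> (\<lambda>x. \<phi> x - \<psi> x) \<le> 0"
    using assms(3) domain_nonempty by (intro supnorm_le) auto
  then show ?thesis
    using response_diff_le[OF assms(1,2,4)] lipschitz_const_nonneg
    by (smt (verit) mult_nonneg_nonpos)
qed

lemma continuous_on_response_path:
  assumes B: "cont_C \<Omega> T B" and y: "y \<in> \<Omega>"
  shows "continuous_on T (\<lambda>u. f (B u) y)"
  unfolding continuous_on_iff
proof (intro ballI allI impI)
  fix t e :: real assume t: "t \<in> T" and e: "0 < e"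
  have Bc: "\<And>s. s \<in> T \<Longrightarrow> continuous_on \<Omega> (B s)" using B unfolding cont_C_def by auto
  obtain d where d: "0 < d"
    "\<And>s. s \<in> T \<Longrightarrow> \<bar>s - t\<bar> < d \<Longrightarrow> supnorm \<Omega> (\<lambda>x. B s x - B t x) < e / (K + 1)"
    using B t e lipschitz_const_nonneg unfolding cont_C_def
    by (metis divide_pos_pos add_nonneg_pos zero_less_one)
  have "dist (f (B s) y) (f (B t) y) < e" if s: "s \<in> T" "dist s t < d" for s
  proof -
    have "\<bar>f (B s) y - f (B t) y\<bar> \<le> K * supnorm \<Omega> (\<lambda>x. B s x - B t x)"
      using response_diff_le Bc s t y by blast
    also have "\<dots> \<le> K * (e / (K + 1))"
      using d(2)[of s] s lipschitz_const_nonneg by (intro mult_left_mono) (auto simp: dist_real_def)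
    also have "\<dots> < e" using lipschitz_const_nonneg e by (simp add: field_simps)
    finally show ?thesis by (simp add: dist_real_def)
  qed
  with d(1) show "\<exists>d>0. \<forall>s\<in>T. dist s t < d \<longrightarrow> dist (f (B s) y) (f (B t) y) < e" by blast
qed

definition min_response :: "real \<Rightarrow> real" where
  "min_response C = (INF y\<in>\<Omega>. f (\<lambda>_. C) y)"

lemma min_response_pos: "0 < min_response C"
proof -
  obtain y0 where y0: "y0 \<in> \<Omega>" "\<And>y. y \<in> \<Omega> \<Longrightarrow> f (\<lambda>_. C) y0 \<le> f (\<lambda>_. C) y"
    using continuous_attains_inf[OF compact_domain domain_nonempty continuous_on_response]
    by (metis continuous_on_const)
  then have "min_response C = f (\<lambda>_. C) y0"
    unfolding min_response_def by (intro cInf_eq_minimum) auto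
  with y0(1) show ?thesis using response_pos by simp
qed

lemma min_response_le:
  assumes "continuous_on \<Omega> B" "\<forall>y\<in>\<Omega>. B y \<le> C" "y \<in> \<Omega>"
  shows "min_response C \<le> f B y"
proof -
  have "min_response C \<le> f (\<lambda>_. C) y"
    unfolding min_response_def using assms(3) response_pos
    by (intro cINF_lower bdd_belowI2[where m=0]) (auto intro: less_imp_le)
  also have "\<dots> \<le> f B y" using assms by (intro response_antimono) auto
  finally show ?thesis .
qed

lemma initial_integral_bounds:
  assumes \<phi>: "cont_C \<Omega> {..0} \<phi>" and y: "y \<in> \<Omega>" and "0 \<le> \<tau>"
  shows "0 \<le> integral {-\<tau>..0} (\<lambda>s. f (\<phi> s) y)" "integral {-\<tau>..0} (\<lambda>s. f (\<phi> s) y) \<le> Mf * \<tau>"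
proof -
  have \<phi>c: "\<And>s. s \<le> 0 \<Longrightarrow> continuous_on \<Omega> (\<phi> s)" using \<phi> unfolding cont_C_def by auto
  have i: "(\<lambda>s. f (\<phi> s) y) integrable_on {-\<tau>..0}"
    using continuous_on_response_path[OF \<phi> y]
    by (intro integrable_continuous_real) (auto intro: continuous_on_subset)
  then show "0 \<le> integral {-\<tau>..0} (\<lambda>s. f (\<phi> s) y)"
    using response_pos[OF \<phi>c y] by (intro integral_nonneg) (auto intro: less_imp_le)
  have "integral {-\<tau>..0} (\<lambda>s. f (\<phi> s) y) \<le> integral {-\<tau>..0} (\<lambda>_. Mf)"
    using i response_le[OF \<phi>c y] by (intro integral_le) auto
  then show "integral {-\<tau>..0} (\<lambda>s. f (\<phi> s) y) \<le> Mf * \<tau>"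
    using assms(3) by (simp add: mult.commute)
qed

lemma hat_tau_seg:
  assumes A: "extends_history \<Omega> r \<phi> A" and t: "0 \<le> t" "ereal t < r" and x: "x \<in> \<Omega>"
    and "0 \<le> \<tau>" and \<delta>: "\<delta> x = integral {-\<tau>..0} (\<lambda>s. f (\<phi> s) x)"
  obtains \<sigma> where "hat_tau f (seg A t) \<delta> x = \<sigma>" "0 \<le> \<sigma>" "\<sigma> \<le> t + \<tau>"
    "integral {t-\<sigma>..t} (\<lambda>u. f (A u) x) = \<delta> x"
proof -
  define g where "g = (\<lambda>u. f (A u) x)"
  have \<phi>: "cont_C \<Omega> {..0} \<phi>" and Ac: "cont_C \<Omega> {t. ereal t < r} A"
    using A unfolding extends_history_def by auto
  have gc: "continuous_on {..t} g"
    unfolding g_def using continuous_on_response_path[OF Ac x]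
    by (rule continuous_on_subset) (auto intro: ereal_less_if_le[OF _ t(2)])
  have gp: "0 < g u" if "u \<le> t" for u
    unfolding g_def using response_pos extends_history_continuous_on[OF A ereal_less_if_le[OF that t(2)]] x by blast
  have gi: "g integrable_on {a..b}" if "b \<le> t" for a b
    using that by (intro integrable_continuous_real continuous_on_subset[OF gc]) auto
  have "f (A u) x = f (\<phi> u) x" if "u \<le> 0" for u
    using A that t x unfolding extends_history_def cont_C_def
    by (intro response_eq extends_history_continuous_on[OF A]) (auto intro: ereal_less_if_le[OF _ t(2)])
  then have \<delta>g: "\<delta> x = integral {-\<tau>..0} g"
    unfolding \<delta> g_def by (intro integral_cong) auto
  have "integral {-\<tau>..0} g + integral {0..t} g = integral {-\<tau>..t} g"
    using assms gi by (intro Henstock_Kurzweil_Integration.integral_combine) auto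
  moreover have "0 \<le> integral {0..t} g"
    using gi gp t by (intro integral_nonneg) (auto intro: less_imp_le)
  moreover have "0 \<le> \<delta> x"
    unfolding \<delta>g using gi gp t by (intro integral_nonneg) (auto intro: less_imp_le)
  ultimately obtain \<sigma> where "(THE \<sigma>. 0 \<le> \<sigma> \<and> integral {t-\<sigma>..t} g = \<delta> x) = \<sigma>"
      "0 \<le> \<sigma>" "\<sigma> \<le> t - - \<tau>" "integral {t-\<sigma>..t} g = \<delta> x"
    using backward_time_exists[OF gc gp, of "-\<tau>" "\<delta> x"] assms \<delta>g by force
  moreover have "integral {-s..0} (\<lambda>\<theta>. f (A (t + \<theta>)) x) = integral {t-s..t} g" for s
    using integral_shift_real_ivl[where f=g and a="t-s" and b=t and c=t] by (simp add: g_def add.commute)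
  ultimately show ?thesis
    using that unfolding hat_tau_def seg_def g_def by simp
qed

lemma hat_tau_diff_le:
  assumes A: "extends_history \<Omega> r \<phi> A" and A': "extends_history \<Omega> r \<phi>' A'"
    and t: "0 \<le> t" "ereal t < r" and x: "x \<in> \<Omega>"
    and \<tau>: "0 \<le> \<tau>" "\<tau> \<le> T" "0 \<le> \<tau>'" "\<tau>' \<le> T"
    and \<delta>: "\<delta> x = integral {-\<tau>..0} (\<lambda>s. f (\<phi> s) x)"
    and \<delta>': "\<delta>' x = integral {-\<tau>'..0} (\<lambda>s. f (\<phi>' s) x)"
    and "0 < m"
    and lower: "\<And>u. - T \<le> u \<Longrightarrow> u \<le> t \<Longrightarrow> m \<le> f (A u) x \<and> m \<le> f (A' u) x"
    and gap: "\<And>u. - max \<tau> \<tau>' \<le> u \<Longrightarrow> u \<le> t \<Longrightarrow> \<bar>f (A u) x - f (A' u) x\<bar> \<le> E"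
  shows "m * \<bar>hat_tau f (seg A t) \<delta> x - hat_tau f (seg A' t) \<delta>' x\<bar>
           \<le> \<bar>\<delta> x - \<delta>' x\<bar> + E * (Mf * T / m)"
proof -
  obtain \<sigma> where \<sigma>: "hat_tau f (seg A t) \<delta> x = \<sigma>" "0 \<le> \<sigma>" "\<sigma> \<le> t + \<tau>"
      "integral {t-\<sigma>..t} (\<lambda>u. f (A u) x) = \<delta> x"
    using hat_tau_seg[where \<delta>=\<delta>, OF A t x \<tau>(1) \<delta>] .
  obtain \<sigma>' where \<sigma>': "hat_tau f (seg A' t) \<delta>' x = \<sigma>'" "0 \<le> \<sigma>'" "\<sigma>' \<le> t + \<tau>'"
      "integral {t-\<sigma>'..t} (\<lambda>u. f (A' u) x) = \<delta>' x"
    using hat_tau_seg[where \<delta>=\<delta>', OF A' t x \<tau>(3) \<delta>'] .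
  have cont: "continuous_on {t-s..t} (\<lambda>u. f (B u) x)"
    if "extends_history \<Omega> r \<psi> B" for s B \<psi>
  proof -
    have "{t-s..t} \<subseteq> {u. ereal u < r}"
      using ereal_less_if_le[OF _ t(2)] by auto
    then show ?thesis
      using continuous_on_response_path[OF _ x] that unfolding extends_history_def
      by (auto intro: continuous_on_subset)
  qed
  have "m * \<bar>\<sigma> - \<sigma>'\<bar> \<le> \<bar>\<delta> x - \<delta>' x\<bar> + E * min \<sigma> \<sigma>'"
    using \<tau> lower gap \<sigma>(3) \<sigma>'(3)
    by (intro backward_time_diff[OF \<sigma>(2) \<sigma>'(2) cont[OF A] cont[OF A'] \<sigma>(4) \<sigma>'(4)]) auto
  moreover have "E * min \<sigma> \<sigma>' \<le> E * (Mf * T / m)"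
  proof (rule mult_left_mono)
    show "0 \<le> E" using gap[of t] t \<tau> by force
    have "m * \<sigma> \<le> \<delta> x"
      using backward_time_le[OF cont[OF A] \<sigma>(2), of m] \<sigma> \<tau> lower by fastforce
    also have "\<dots> \<le> Mf * T"
      using initial_integral_bounds(2)[of \<phi> x \<tau>] A x \<tau> \<delta> response_bound_nonneg
      unfolding extends_history_def by (smt (verit) mult_left_mono)
    finally show "min \<sigma> \<sigma>' \<le> Mf * T / m"
      using \<open>0 < m\<close> by (simp add: pos_le_divide_eq mult.commute min_le_iff_disj)
  qed
  ultimately show ?thesis using \<sigma>(1) \<sigma>'(1) by simp
qed

lemma response_gap_le_SUP:
  assumes A: "extends_history \<Omega> r \<phi> A" and A': "extends_history \<Omega> r \<phi>' A'"
    and bound: "\<And>s y. - T \<le> s \<Longrightarrow> ereal s < r \<Longrightarrow> y \<in> \<Omega> \<Longrightarrow> \<bar>A s y\<bar> \<le> C \<and> \<bar>A' s y\<bar> \<le> C"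
  defines "D \<equiv> SUP s\<in>{s. - T \<le> s \<and> ereal s < r}. supnorm \<Omega> (\<lambda>y. A s y - A' s y)"
  shows "\<And>u x. - T \<le> u \<Longrightarrow> ereal u < r \<Longrightarrow> x \<in> \<Omega> \<Longrightarrow> \<bar>f (A u) x - f (A' u) x\<bar> \<le> K * D"
    and "- T \<le> u \<Longrightarrow> ereal u < r \<Longrightarrow> 0 \<le> D"
proof -
  have "\<bar>A s y - A' s y\<bar> \<le> 2 * C" if "s \<in> {s. - T \<le> s \<and> ereal s < r}" "y \<in> \<Omega>" for s y
    using bound that by fastforce
  then have le_D: "supnorm \<Omega> (\<lambda>y. A u y - A' u y) \<le> D" if "- T \<le> u" "ereal u < r" for u
    unfolding D_def using that
    by (intro supnorm_le_SUP_supnorm[OF domain_nonempty, of _ "\<lambda>s y. A s y - A' s y"]) auto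
  have cont: "continuous_on \<Omega> (\<lambda>y. A u y - A' u y)" if "ereal u < r" for u
    using A A' that by (intro continuous_on_diff extends_history_continuous_on)
  show "\<bar>f (A u) x - f (A' u) x\<bar> \<le> K * D" if "- T \<le> u" "ereal u < r" "x \<in> \<Omega>" for u x
    using response_diff_le[OF extends_history_continuous_on[OF A] extends_history_continuous_on[OF A']]
      mult_left_mono[OF le_D lipschitz_const_nonneg] that by (meson order_trans)
  obtain x where "x \<in> \<Omega>" using domain_nonempty by blast
  then show "0 \<le> D" if "- T \<le> u" "ereal u < r"
    using abs_le_supnorm[OF compact_domain cont] le_D that by (meson abs_ge_zero order_trans)
qed

lemma initial_integral_diff_le_supnorm:
  assumes "cont_C \<Omega> {..0} \<phi>" "cont_C \<Omega> {..0} \<phi>'"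
    and "\<forall>y\<in>\<Omega>. 0 \<le> \<tau> y \<and> \<tau> y \<le> T" "\<forall>y\<in>\<Omega>. 0 \<le> \<tau>' y \<and> \<tau>' y \<le> T" "x \<in> \<Omega>"
  defines "\<delta> \<equiv> \<lambda>x. integral {- \<tau> x..0} (\<lambda>s. f (\<phi> s) x)"
    and "\<delta>' \<equiv> \<lambda>x. integral {- \<tau>' x..0} (\<lambda>s. f (\<phi>' s) x)"
  shows "\<bar>\<delta> x - \<delta>' x\<bar> \<le> supnorm \<Omega> (\<lambda>y. \<delta> y - \<delta>' y)"
proof (rule abs_le_supnorm_of_bounded[OF _ assms(5)])
  fix y assume y: "y \<in> \<Omega>"
  have "Mf * \<tau> y \<le> Mf * T" "Mf * \<tau>' y \<le> Mf * T"
    using assms(3,4) y by (auto intro: mult_left_mono response_bound_nonneg)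
  then show "\<bar>\<delta> y - \<delta>' y\<bar> \<le> Mf * T"
    using initial_integral_bounds[OF assms(1) y, of "\<tau> y"] initial_integral_bounds[OF assms(2) y, of "\<tau>' y"]
      assms(3,4) y unfolding \<delta>_def \<delta>'_def by auto
qed

text \<open>\<open>min_response C\<close> bounds \<open>f\<close> from below along every history bounded by
  \<open>C = max M (exp (\<alpha> * M0) * M0)\<close>, and \<open>Mf * M0 / m\<close> bounds both delays.\<close>
definition delay_lipschitz_const :: "real \<Rightarrow> real \<Rightarrow> real \<Rightarrow> real" where
  "delay_lipschitz_const \<alpha> M0 M =
     (let m = min_response (max M (exp (\<alpha> * M0) * M0)) in (1 + K * Mf * M0 / m) / m)"

lemma delay_lipschitz_const_pos:
  assumes "0 \<le> M0"
  shows "0 < delay_lipschitz_const \<alpha> M0 M"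
  using min_response_pos[of "max M (exp (\<alpha> * M0) * M0)"] assms lipschitz_const_nonneg
    response_bound_nonneg
  unfolding delay_lipschitz_const_def Let_def by (simp add: add_pos_nonneg)

lemma hat_tau_lipschitz:
  assumes "0 < M0" "0 \<le> \<alpha>"
    and \<phi>: "in_Lip_alpha \<Omega> \<alpha> \<phi>" "Lip_alpha_norm \<Omega> \<alpha> \<phi> + supnorm \<Omega> \<tau>0 \<le> M0"
    and \<phi>': "in_Lip_alpha \<Omega> \<alpha> \<phi>'" "Lip_alpha_norm \<Omega> \<alpha> \<phi>' + supnorm \<Omega> \<tau>0' \<le> M0"
    and \<tau>0: "continuous_on \<Omega> \<tau>0" "\<forall>x\<in>\<Omega>. 0 \<le> \<tau>0 x"
    and \<tau>0': "continuous_on \<Omega> \<tau>0'" "\<forall>x\<in>\<Omega>. 0 \<le> \<tau>0' x"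
    and A: "extends_history \<Omega> r \<phi> A"
      "bdd_above ((\<lambda>t. supnorm \<Omega> (A t)) ` {t. 0 \<le> t \<and> ereal t < r})"
      "(SUP t\<in>{t. 0 \<le> t \<and> ereal t < r}. supnorm \<Omega> (A t)) \<le> M"
    and A': "extends_history \<Omega> r \<phi>' A'"
      "bdd_above ((\<lambda>t. supnorm \<Omega> (A' t)) ` {t. 0 \<le> t \<and> ereal t < r})"
      "(SUP t\<in>{t. 0 \<le> t \<and> ereal t < r}. supnorm \<Omega> (A' t)) \<le> M"
    and t: "0 \<le> t" "ereal t < r" and x: "x \<in> \<Omega>"
  defines "\<delta>0 \<equiv> \<lambda>x. integral {- \<tau>0 x..0} (\<lambda>s. f (\<phi> s) x)"
    and "\<delta>0' \<equiv> \<lambda>x. integral {- \<tau>0' x..0} (\<lambda>s. f (\<phi>' s) x)"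
    and "taubar \<equiv> max (SUP x\<in>\<Omega>. \<tau>0 x) (SUP x\<in>\<Omega>. \<tau>0' x)"
  shows "\<bar>hat_tau f (seg A t) \<delta>0 x - hat_tau f (seg A' t) \<delta>0' x\<bar>
    \<le> delay_lipschitz_const \<alpha> M0 M *
       ((SUP s\<in>{s. - taubar \<le> s \<and> ereal s < r}. supnorm \<Omega> (\<lambda>y. A s y - A' s y))
        + supnorm \<Omega> (\<lambda>y. \<delta>0 y - \<delta>0' y))"
    (is "\<bar>?\<sigma> - ?\<sigma>'\<bar> \<le> _ * (?D + ?S)")
proof -
  define C where "C = max M (exp (\<alpha> * M0) * M0)"
  define m where "m = min_response C"
  note bounds = initial_data_bounds[OF compact_domain domain_nonempty assms(2) less_imp_le[OF assms(1)]]
  note b = bounds[OF \<phi>(1) \<tau>0 \<phi>(2) A] bounds[OF \<phi>'(1) \<tau>0' \<phi>'(2) A']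
  have m: "0 < m" unfolding m_def by (rule min_response_pos)
  have \<tau>_le_taubar: "\<tau>0 y \<le> taubar" "\<tau>0' y \<le> taubar" if "y \<in> \<Omega>" for y
    unfolding taubar_def using b that by (auto intro!: cSUP_upper2 bdd_aboveI2 simp: le_max_iff_disj)
  have taubar_le: "taubar \<le> M0"
    unfolding taubar_def using b domain_nonempty by (auto intro!: cSUP_least)
  have hist: "\<bar>A s y\<bar> \<le> C \<and> \<bar>A' s y\<bar> \<le> C" if "- taubar \<le> s" "ereal s < r" "y \<in> \<Omega>" for s y
  proof -
    have "- M0 \<le> s" using taubar_le that by linarith
    then show ?thesis using b(2)[OF _ that(2,3)] b(4)[OF _ that(2,3)] unfolding C_def by simp
  qed
  have gap: "\<bar>f (A u) x - f (A' u) x\<bar> \<le> K * ?D" if "- taubar \<le> u" "ereal u < r" for u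
    using response_gap_le_SUP(1)[OF A(1) A'(1), where T=taubar and C=C] hist that x by blast
  have "- taubar \<le> t" using \<tau>_le_taubar(1)[OF x] \<tau>0(2) x t by force
  then have D_nonneg: "0 \<le> ?D" using response_gap_le_SUP(2)[OF A(1) A'(1) hist] t(2) by blast
  have S: "\<bar>\<delta>0 x - \<delta>0' x\<bar> \<le> ?S"
    unfolding \<delta>0_def \<delta>0'_def using A(1) A'(1) \<tau>0 \<tau>0' b x unfolding extends_history_def
    by (intro initial_integral_diff_le_supnorm[where T=M0]) auto
  have lower: "m \<le> f (A u) x \<and> m \<le> f (A' u) x" if "- M0 \<le> u" "u \<le> t" for u
    unfolding m_def C_def using b that ereal_less_if_le[OF _ t(2)] x
    by (auto intro!: min_response_le extends_history_continuous_on[OF A(1)]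
        extends_history_continuous_on[OF A'(1)] simp: abs_le_iff)
  have key: "m * \<bar>?\<sigma> - ?\<sigma>'\<bar> \<le> \<bar>\<delta>0 x - \<delta>0' x\<bar> + K * ?D * (Mf * M0 / m)"
  proof (rule hat_tau_diff_le[OF A(1) A'(1) t x _ _ _ _ _ _ m lower])
    show "\<bar>f (A u) x - f (A' u) x\<bar> \<le> K * ?D" if "- max (\<tau>0 x) (\<tau>0' x) \<le> u" "u \<le> t" for u
      using gap[OF _ ereal_less_if_le[OF that(2) t(2)]] \<tau>_le_taubar[OF x] that(1) by simp
  qed (use x \<tau>0 \<tau>0' b in \<open>auto simp: \<delta>0_def \<delta>0'_def\<close>)
  define X where "X = K * Mf * M0 / m"
  have X: "0 \<le> X" unfolding X_def
    using lipschitz_const_nonneg response_bound_nonneg assms(1) m by simp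
  have S_nonneg: "0 \<le> ?S" using S by linarith
  have "K * ?D * (Mf * M0 / m) = X * ?D" by (simp add: X_def)
  then have "m * \<bar>?\<sigma> - ?\<sigma>'\<bar> \<le> ?S + X * ?D" using key S by linarith
  also have "\<dots> \<le> (1 + X) * (?D + ?S)"
    using X D_nonneg S_nonneg mult_nonneg_nonneg[OF X S_nonneg] by (simp add: algebra_simps)
  finally show ?thesis
    using m unfolding delay_lipschitz_const_def Let_def X_def m_def C_def
    by (simp add: pos_le_divide_eq mult.commute)
qed

end

theorem lemma3p9:
  fixes \<Omega> :: "'a::euclidean_space set"
    and f :: "('a \<Rightarrow> real) \<Rightarrow> ('a \<Rightarrow> real)"
    and \<alpha> :: real
  assumes "compact \<Omega>"
    and "\<alpha> \<ge> 0"
    and "admissible_f \<Omega> f"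
  shows "\<forall>M0 > 0. \<forall>M :: real. \<exists>L\<tau> > 0.
    \<forall>(r :: ereal) \<phi> \<phi>' (\<tau>0 :: 'a \<Rightarrow> real) \<tau>0' A A'.
      r > 0 \<longrightarrow>
      in_Lip_alpha \<Omega> \<alpha> \<phi> \<longrightarrow> in_Lip_alpha \<Omega> \<alpha> \<phi>' \<longrightarrow>
      continuous_on \<Omega> \<tau>0 \<longrightarrow> (\<forall>x\<in>\<Omega>. 0 \<le> \<tau>0 x) \<longrightarrow>
      continuous_on \<Omega> \<tau>0' \<longrightarrow> (\<forall>x\<in>\<Omega>. 0 \<le> \<tau>0' x) \<longrightarrow>
      Lip_alpha_norm \<Omega> \<alpha> \<phi> + supnorm \<Omega> \<tau>0 \<le> M0 \<longrightarrow>
      Lip_alpha_norm \<Omega> \<alpha> \<phi>' + supnorm \<Omega> \<tau>0' \<le> M0 \<longrightarrow>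
      cont_C \<Omega> {t. ereal t < r} A \<longrightarrow> cont_C \<Omega> {t. ereal t < r} A' \<longrightarrow>
      (\<forall>t\<le>0. \<forall>x\<in>\<Omega>. A t x = \<phi> t x) \<longrightarrow>
      (\<forall>t\<le>0. \<forall>x\<in>\<Omega>. A' t x = \<phi>' t x) \<longrightarrow>
      bdd_above ((\<lambda>t. supnorm \<Omega> (A t)) ` {t. 0 \<le> t \<and> ereal t < r}) \<longrightarrow>
      bdd_above ((\<lambda>t. supnorm \<Omega> (A' t)) ` {t. 0 \<le> t \<and> ereal t < r}) \<longrightarrow>
      M = max (SUP t\<in>{t. 0 \<le> t \<and> ereal t < r}. supnorm \<Omega> (A t))
              (SUP t\<in>{t. 0 \<le> t \<and> ereal t < r}. supnorm \<Omega> (A' t)) \<longrightarrow>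
      (let \<delta>0 = (\<lambda>x. integral {- \<tau>0 x..0} (\<lambda>s. f (\<phi> s) x));
           \<delta>0' = (\<lambda>x. integral {- \<tau>0' x..0} (\<lambda>s. f (\<phi>' s) x));
           taubar = max (SUP x\<in>\<Omega>. \<tau>0 x) (SUP x\<in>\<Omega>. \<tau>0' x)
       in \<forall>t x. 0 \<le> t \<longrightarrow> ereal t < r \<longrightarrow> x \<in> \<Omega> \<longrightarrow>
            \<bar>hat_tau f (seg A t) \<delta>0 x - hat_tau f (seg A' t) \<delta>0' x\<bar>
              \<le> L\<tau> * ((SUP s\<in>{s. - taubar \<le> s \<and> ereal s < r}.
                          supnorm \<Omega> (\<lambda>y. A s y - A' s y))
                       + supnorm \<Omega> (\<lambda>y. \<delta>0 y - \<delta>0' y)))"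
proof (cases "\<Omega> = {}")
  case True
  then show ?thesis by (auto simp: Let_def intro: exI[of _ 1])
next
  case False
  then obtain K Mf where "admissible_response \<Omega> f K Mf"
    using admissible_f_imp_admissible_response assms(1,3) by blast
  then interpret admissible_response \<Omega> f K Mf .
  show ?thesis
    apply (intro allI impI)
    subgoal for M0 M
      unfolding Let_def
      by (intro exI[of _ "delay_lipschitz_const \<alpha> M0 M"] conjI allI impI delay_lipschitz_const_pos
          hat_tau_lipschitz in_Lip_alpha_extends_history) (simp_all add: assms(2))
    done
qed

end
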